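(* Let $(\Theta,p,A,u,v)$ be any persuasion environment and suppose the receiver's updating rule is the geometric distortion $\mu^G_\alpha$ with $\alpha>0$. Then $\mathcal{V}^1(p,\mu^G_\alpha)=\mathcal{V}^2(p,\mu^G_\alpha)$.
   Context: A persuasion environment $(\Theta,p,A,u,v)$: finite state set $\Theta$, full-support prior $p\in\Delta(\Theta)$, finite action set $A$, receiver utility $u(a,\theta)$, sender utility $v(a)$ depending only on the action. $\hat a(q)$ is a sender-optimal selection from $\arg\max_{a}\mathbb{E}_q[u(a,\tilde\theta)]$ and $\hat v(q):=v(\hat a(q))$. The Bayesian sender chooses experiments $\sigma=(\sigma_\theta)_\theta$, $\sigma_\theta\in\Delta(S)$, $S$ a fixed sufficiently large finite signal set. Bayesian updating: $\mu_B(\sigma,p)(\theta\mid s)=\sigma_\theta(s)p(\theta)/\sum_{\theta'}\sigma_{\theta'}(s)p(\theta')$. Geometric distortion: $\mu^G_\alpha(\sigma,p)(\theta\mid s)=\frac{p(\theta)\sigma_\theta(s)^\alpha}{\sum_{\theta'}p(\theta')\sigma_{\theta'}(s)^\alpha}$; it satisfies $\mu^G_\alpha(\sigma,p)(\cdot\mid s)=D_p(\mu_B(\sigma,p)(\cdot\mid s))$ with $D_p(q)(\theta)=\frac{p(\theta)^{1-\alpha}q(\theta)^\alpha}{\sum_{\theta'}p(\theta')^{1-\alpha}q(\theta')^\alpha}$. One-shot: $\mathcal{R}(p)$ is the set of distributions $\rho$ over $\Delta(\Theta)$ with $\mathbb{E}_\rho[\tilde q]=p$; $\check v(q):=\hat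 v(D_p(q))$; $\mathcal{V}^1(p,\mu):=\{\mathbb{E}_\rho[\check v(\tilde q)]:\rho\in\mathcal{R}(p)\}$. Two-step: after a first experiment the sender's belief is the Bayesian posterior $q$ and the receiver's is $D_p(q)$; after a second experiment the sender's Bayesian posterior (from $q$) is $r$ and the receiver's belief is $D^{II}_q(r):=D_{D_p(q)}\!\left(\frac{r\cdot(D_p(q)/q)}{\sum_{\theta'}r(\theta')D_p(q)(\theta')/q(\theta')}\right)$ (componentwise). Let $\check v^q(r):=\hat v(D^{II}_q(r))$ and $\mathcal{V}^2(p,\mu):=\{\mathbb{E}_{\rho_1}[\mathbb{E}_{\rho_2(\tilde q)}[\check v^{\tilde q}(\tilde r)]]:\rho_1\in\mathcal{R}(p),\ \rho_2(q)\in\mathcal{R}(q)\ \forall q\in\operatorname{supp}\rho_1\}$. *)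

theory Defs
  imports "HOL-Probability.Probability_Mass_Function"
begin

definition beliefs :: "('th::finite \<Rightarrow> real) set" where
  "beliefs = {q. (\<forall>t. 0 \<le> q t) \<and> (\<Sum>t\<in>UNIV. q t) = 1}"

definition exp_util :: "('a \<Rightarrow> 'th::finite \<Rightarrow> real) \<Rightarrow> ('th \<Rightarrow> real) \<Rightarrow> 'a \<Rightarrow> real" where
  "exp_util u q a = (\<Sum>t\<in>UNIV. q t * u a t)"

definition best_actions :: "('a::finite \<Rightarrow> 'th::finite \<Rightarrow> real) \<Rightarrow> ('th \<Rightarrow> real) \<Rightarrow> 'a set" where
  "best_actions u q = {a. \<forall>b. exp_util u q b \<le> exp_util u q a}"

text \<open>Sender value under a sender-optimal selection: v(hat a(q)).\<close>
definition vhat :: "('a::finite \<Rightarrow> 'th::finite \<Rightarrow> real) \<Rightarrow> ('a \<Rightarrow> real) \<Rightarrow> ('th \<Rightarrow> real) \<Rightarrow> real" where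
  "vhat u v q = Max (v ` best_actions u q)"

definition Dist :: "real \<Rightarrow> ('th::finite \<Rightarrow> real) \<Rightarrow> ('th \<Rightarrow> real) \<Rightarrow> ('th \<Rightarrow> real)" where
  "Dist \<alpha> p q = (\<lambda>t. p t powr (1 - \<alpha>) * q t powr \<alpha> /
                      (\<Sum>t'\<in>UNIV. p t' powr (1 - \<alpha>) * q t' powr \<alpha>))"

definition DistII :: "real \<Rightarrow> ('th::finite \<Rightarrow> real) \<Rightarrow> ('th \<Rightarrow> real) \<Rightarrow> ('th \<Rightarrow> real) \<Rightarrow> ('th \<Rightarrow> real)" where
  "DistII \<alpha> p q r =
     (let d = Dist \<alpha> p q;
          w = (\<lambda>t. r t * d t / q t / (\<Sum>t'\<in>UNIV. r t' * d t' / q t'))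
      in Dist \<alpha> d w)"

definition splits :: "('th::finite \<Rightarrow> real) \<Rightarrow> ('th \<Rightarrow> real) pmf set" where
  "splits p = {\<rho>. finite (set_pmf \<rho>) \<and> set_pmf \<rho> \<subseteq> beliefs \<and>
                  (\<forall>t. measure_pmf.expectation \<rho> (\<lambda>q. q t) = p t)}"

definition V1 :: "('a::finite \<Rightarrow> 'th::finite \<Rightarrow> real) \<Rightarrow> ('a \<Rightarrow> real) \<Rightarrow> real \<Rightarrow> ('th \<Rightarrow> real) \<Rightarrow> real set" where
  "V1 u v \<alpha> p = {measure_pmf.expectation \<rho> (\<lambda>q. vhat u v (Dist \<alpha> p q)) | \<rho>. \<rho> \<in> splits p}"

definition V2 :: "('a::finite \<Rightarrow> 'th::finite \<Rightarrow> real) \<Rightarrow> ('a \<Rightarrow> real) \<Rightarrow> real \<Rightarrow> ('th \<Rightarrow> real) \<Rightarrow> real set" where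
  "V2 u v \<alpha> p = {measure_pmf.expectation \<rho>1
                     (\<lambda>q. measure_pmf.expectation (\<rho>2 q) (\<lambda>r. vhat u v (DistII \<alpha> p q r)))
                   | \<rho>1 \<rho>2. \<rho>1 \<in> splits p \<and> (\<forall>q\<in>set_pmf \<rho>1. \<rho>2 q \<in> splits q)}"

end

theory Submission
  imports Defs
begin

text \<open>Geometric distortion is path independent: for every posterior \<open>r\<close> whose support lies in
  that of \<open>q\<close>, the second-step belief D^II_q(r) coincides with the one-step belief D_p(r),
  because both are proportional to p^(1-\<alpha>) r^\<alpha>. A two-step splitting therefore yields the same
  sender value as the compound one-step splitting \<open>bind_pmf \<rho>1 \<rho>2\<close>, which is again Bayes plausible;
  conversely a one-step splitting is a two-step one with an uninformative second stage.\<close>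

lemma expectation_pmf_cong:
  fixes f g :: "'a \<Rightarrow> real"
  assumes "\<And>x. x \<in> set_pmf M \<Longrightarrow> f x = g x"
  shows "measure_pmf.expectation M f = measure_pmf.expectation M g"
  using assms by (intro integral_cong_AE) (auto simp: AE_measure_pmf_iff)

lemma expectation_bind_pmf_finite:
  fixes f :: "'b \<Rightarrow> real"
  assumes M: "finite (set_pmf M)" and N: "\<And>x. x \<in> set_pmf M \<Longrightarrow> finite (set_pmf (N x))"
  shows "measure_pmf.expectation (bind_pmf M N) f
           = measure_pmf.expectation M (\<lambda>x. measure_pmf.expectation (N x) f)"
  by (simp add: pmf_expectation_bind[OF M N subset_refl] integral_measure_pmf[OF M])

lemma belief_nonneg: "q \<in> beliefs \<Longrightarrow> 0 \<le> q t"
  by (simp add: beliefs_def)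

lemma belief_exists_pos:
  assumes "q \<in> beliefs" obtains t where "q t > 0"
proof -
  have "q \<noteq> (\<lambda>_. 0)" using assms by (auto simp: beliefs_def)
  then show ?thesis using that belief_nonneg[OF assms] by (force simp: less_le)
qed

lemma return_pmf_in_splits: "q \<in> beliefs \<Longrightarrow> return_pmf q \<in> splits q"
  by (simp add: splits_def)

lemma splits_support_vanishes:
  assumes \<rho>: "\<rho> \<in> splits q" and r: "r \<in> set_pmf \<rho>" and "q t = 0"
  shows "r t = 0"
proof -
  have "measure_pmf.expectation \<rho> (\<lambda>x. x t) = 0"
    using \<rho> \<open>q t = 0\<close> by (simp add: splits_def)
  moreover have "integrable \<rho> (\<lambda>x. x t)"
    using \<rho> by (simp add: splits_def integrable_measure_pmf_finite)
  moreover have "AE x in \<rho>. 0 \<le> x t"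
    using \<rho> by (auto simp: splits_def AE_measure_pmf_iff intro: belief_nonneg)
  ultimately have "AE x in \<rho>. x t = 0"
    by (simp add: integral_nonneg_eq_0_iff_AE)
  then show ?thesis using r by (simp add: AE_measure_pmf_iff)
qed

lemma bind_pmf_in_splits:
  assumes \<rho>1: "\<rho>1 \<in> splits p" and \<rho>2: "\<And>q. q \<in> set_pmf \<rho>1 \<Longrightarrow> \<rho>2 q \<in> splits q"
  shows "bind_pmf \<rho>1 \<rho>2 \<in> splits p"
proof -
  have fin1: "finite (set_pmf \<rho>1)" and fin2: "\<And>q. q \<in> set_pmf \<rho>1 \<Longrightarrow> finite (set_pmf (\<rho>2 q))"
    using \<rho>1 \<rho>2 by (auto simp: splits_def)
  have "measure_pmf.expectation (bind_pmf \<rho>1 \<rho>2) (\<lambda>r. r t) = p t" for t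
  proof -
    have "measure_pmf.expectation (bind_pmf \<rho>1 \<rho>2) (\<lambda>r. r t)
            = measure_pmf.expectation \<rho>1 (\<lambda>q. measure_pmf.expectation (\<rho>2 q) (\<lambda>r. r t))"
      by (rule expectation_bind_pmf_finite[OF fin1 fin2])
    also have "\<dots> = measure_pmf.expectation \<rho>1 (\<lambda>q. q t)"
      using \<rho>2 by (intro expectation_pmf_cong) (simp add: splits_def)
    finally show ?thesis using \<rho>1 by (simp add: splits_def)
  qed
  then show ?thesis
    using fin1 fin2 \<rho>1 \<rho>2 by (auto simp: splits_def)
qed

lemma Dist_eqI_proportional:
  assumes "c \<noteq> 0"
    and "\<And>t. p' t powr (1 - \<alpha>) * q' t powr \<alpha> = c * (p t powr (1 - \<alpha>) * q t powr \<alpha>)"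
  shows "Dist \<alpha> p' q' = Dist \<alpha> p q"
  using assms by (simp add: Dist_def sum_distrib_left[symmetric])

lemma Dist_normaliser_pos:
  assumes p: "\<forall>t. p t > 0" and q: "q \<in> beliefs"
  shows "(\<Sum>t\<in>UNIV. p t powr (1 - \<alpha>) * q t powr \<alpha>) > 0"
proof -
  obtain t0 where "q t0 > 0" using q by (rule belief_exists_pos)
  then show ?thesis using p[rule_format, of t0] by (intro sum_pos2[of _ t0]) auto
qed

lemma DistII_eq_Dist:
  fixes p q r :: "'th::finite \<Rightarrow> real"
  assumes p: "\<forall>t. p t > 0" and q: "q \<in> beliefs" and r: "r \<in> beliefs"
    and supp: "\<And>t. q t = 0 \<Longrightarrow> r t = 0"
  shows "DistII \<alpha> p q r = Dist \<alpha> p r"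
proof -
  have q_pos_if_r_pos: "q t > 0" if "r t > 0" for t
    using that supp belief_nonneg[OF q, of t] by (cases "q t = 0") auto
  define Z where "Z = (\<Sum>t\<in>UNIV. p t powr (1 - \<alpha>) * q t powr \<alpha>)"
  define d where "d = Dist \<alpha> p q"
  define S where "S = (\<Sum>t\<in>UNIV. r t * d t / q t)"
  define w where "w t = r t * d t / q t / S" for t
  have d_eq: "d t = p t powr (1 - \<alpha>) * q t powr \<alpha> / Z" for t
    by (simp add: d_def Dist_def Z_def)
  obtain t1 where "r t1 > 0" using r by (rule belief_exists_pos)
  then have "q t1 > 0" by (rule q_pos_if_r_pos)
  have "Z > 0" unfolding Z_def using p q by (rule Dist_normaliser_pos)
  then have d_pos: "d t > 0" if "q t > 0" for t
    using p[rule_format, of t] that by (simp add: d_eq)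
  have "S > 0" unfolding S_def
  proof (rule sum_pos2[of _ t1])
    show "0 < r t1 * d t1 / q t1" using \<open>r t1 > 0\<close> \<open>q t1 > 0\<close> d_pos by simp
    show "0 \<le> r t * d t / q t" for t
      using d_pos[of t] belief_nonneg[OF q, of t] belief_nonneg[OF r, of t] supp[of t]
      by (cases "q t = 0") auto
  qed simp_all
  have "d t powr (1 - \<alpha>) * w t powr \<alpha> = 1 / (Z * S powr \<alpha>) * (p t powr (1 - \<alpha>) * r t powr \<alpha>)"
    for t
  proof (cases "r t = 0")
    case True
    then show ?thesis by (simp add: w_def)
  next
    case False
    then have "r t > 0" using belief_nonneg[OF r] by (simp add: less_le)
    then have "q t > 0" by (rule q_pos_if_r_pos)
    have "d t powr (1 - \<alpha>) * w t powr \<alpha> = d t * (r t / q t) powr \<alpha> / S powr \<alpha>"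
      using d_pos[OF \<open>q t > 0\<close>] \<open>r t > 0\<close> \<open>S > 0\<close>
      by (simp add: w_def powr_divide powr_mult powr_add[symmetric] mult.commute)
    also have "\<dots> = p t powr (1 - \<alpha>) * (q t powr \<alpha> * (r t / q t) powr \<alpha>) / (Z * S powr \<alpha>)"
      by (simp add: d_eq)
    also have "q t powr \<alpha> * (r t / q t) powr \<alpha> = r t powr \<alpha>"
      using \<open>q t > 0\<close> \<open>r t > 0\<close> by (simp add: powr_mult[symmetric])
    finally show ?thesis by simp
  qed
  then have "Dist \<alpha> d w = Dist \<alpha> p r"
    using \<open>Z > 0\<close> \<open>S > 0\<close> by (intro Dist_eqI_proportional[where c = "1 / (Z * S powr \<alpha>)"]) auto
  then show ?thesis
    by (simp add: DistII_def Let_def d_def[symmetric] S_def[symmetric] w_def[abs_def])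
qed

lemma V1_subset_V2:
  assumes "\<forall>t. p t > 0"
  shows "V1 u v \<alpha> p \<subseteq> V2 u v \<alpha> p"
proof
  fix x assume "x \<in> V1 u v \<alpha> p"
  then obtain \<rho> where \<rho>: "\<rho> \<in> splits p"
    and x: "x = measure_pmf.expectation \<rho> (\<lambda>q. vhat u v (Dist \<alpha> p q))"
    unfolding V1_def by blast
  have bel: "q \<in> beliefs" if "q \<in> set_pmf \<rho>" for q
    using \<rho> that by (auto simp: splits_def)
  have "x = measure_pmf.expectation \<rho>
              (\<lambda>q. measure_pmf.expectation (return_pmf q) (\<lambda>r. vhat u v (DistII \<alpha> p q r)))"
    unfolding x using DistII_eq_Dist[OF assms bel bel] by (intro expectation_pmf_cong) simp
  then show "x \<in> V2 u v \<alpha> p"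
    unfolding V2_def using \<rho> bel return_pmf_in_splits by blast
qed

lemma V2_subset_V1:
  assumes "\<forall>t. p t > 0"
  shows "V2 u v \<alpha> p \<subseteq> V1 u v \<alpha> p"
proof
  fix x assume "x \<in> V2 u v \<alpha> p"
  then obtain \<rho>1 \<rho>2 where \<rho>1: "\<rho>1 \<in> splits p" and \<rho>2: "\<forall>q\<in>set_pmf \<rho>1. \<rho>2 q \<in> splits q"
    and x: "x = measure_pmf.expectation \<rho>1
                  (\<lambda>q. measure_pmf.expectation (\<rho>2 q) (\<lambda>r. vhat u v (DistII \<alpha> p q r)))"
    unfolding V2_def by blast
  have "DistII \<alpha> p q r = Dist \<alpha> p r" if q: "q \<in> set_pmf \<rho>1" and r: "r \<in> set_pmf (\<rho>2 q)" for q r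
    using \<rho>1 \<rho>2 q r splits_support_vanishes[of "\<rho>2 q" q r]
    by (intro DistII_eq_Dist[OF assms]) (auto simp: splits_def)
  then have "x = measure_pmf.expectation \<rho>1
                   (\<lambda>q. measure_pmf.expectation (\<rho>2 q) (\<lambda>r. vhat u v (Dist \<alpha> p r)))"
    unfolding x by (intro expectation_pmf_cong) simp
  also have "\<dots> = measure_pmf.expectation (bind_pmf \<rho>1 \<rho>2) (\<lambda>r. vhat u v (Dist \<alpha> p r))"
    using \<rho>1 \<rho>2 by (intro expectation_bind_pmf_finite[symmetric]) (auto simp: splits_def)
  finally show "x \<in> V1 u v \<alpha> p"
    unfolding V1_def using bind_pmf_in_splits \<rho>1 \<rho>2 by blast
qed

theorem corollary1:
  fixes p :: "'th::finite \<Rightarrow> real"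
    and u :: "'a::finite \<Rightarrow> 'th \<Rightarrow> real"
    and v :: "'a \<Rightarrow> real"
    and \<alpha> :: real
  assumes "p \<in> beliefs"
    and "\<forall>t. p t > 0"
    and "\<alpha> > 0"
  shows "V1 u v \<alpha> p = V2 u v \<alpha> p"
  using V1_subset_V2[OF assms(2)] V2_subset_V1[OF assms(2)] by (rule equalityI)

end
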